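(* Let $\epsilon>0$. Assume there exists a quantum algorithm $\mathcal{A}$ that takes a classical witness $w\in\{0,1\}^q$, makes $k$ queries to the graph oracle, and satisfies: for every $S\subseteq V$ with $|S|=\zeta$ there exists $w_S\in\{0,1\}^q$ with $\mathbb{E}_{G\leftarrow B_S}\Pr[\mathcal{A}^G(w_S)\text{ accepts}]\ge1-\epsilon$, and for every $\mathsf{NO}$ distribution $B_{\mathsf{NO}}$ and every $w\in\{0,1\}^q$, $\mathbb{E}_{G\leftarrow B_{\mathsf{NO}}}\Pr[\mathcal{A}^G(w)\text{ accepts}]\le\epsilon$. Then for every $\mu>0$ there exist a $(\mu,\zeta,2q/(\mu\log\ell))$-sunflower $\Sigma$ and a $k$-query quantum algorithm $\mathcal{A}'$ (taking no witness) such that $\mathbb{E}_{G\leftarrow B_S}\Pr[\mathcal{A}'^G\text{ accepts}]\ge1-\epsilon$ for every $S\in\Sigma$, and $\mathbb{E}_{G\leftarrow B_{\mathsf{NO}}}\Pr[\mathcal{A}'^G\text{ accepts}]\le\epsilon$ for every $\mathsf{NO}$ distribution $B_{\mathsf{NO}}$.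
   Context: $N=2^n$ (sufficiently large), $|V|=N$; $d=100$, $\ell=N^{1/10}$, $\gamma=N^{-1/10}$, $M=(1+\gamma)N$, $z=N^{9/10}$, $\zeta=(1+\gamma)z$, $\alpha=1/(2\cdot10^8)$; $\log$ is base $2$. Graphs are $d$-colored $d$-regular on $V$, accessed via $|j,\kappa,z\rangle\mapsto|j,\kappa,z\oplus G(j,\kappa)\rangle$ where $G(j,\kappa)$ is the $\kappa$-neighbor of $j$. A $\mathsf{NO}$ distribution is a distribution supported on $\alpha$-expanding graphs (second largest eigenvalue of the normalized adjacency matrix at most $1-\alpha$). Distribution $P_{M,\ell}$: take $V'$ of size $M$ partitioned into $\ell$ equal parts $V_1,\dots,V_\ell$; on each part take the union of $d$ independent uniformly random perfect matchings, the $\kappa$-th colored $\kappa$, giving $G'$; choose $k:V\to[\ell]$ uniformly at random and an injection $\iota:V\to V'$ with $\iota(j)$ uniformly random in $V_{k(j)}$ without replacement (outputting the edgeless graph if some part is exhausted); let $G$ contain $(j_1,j_2,\kappa)$ iff $(\iota(j_1),\iota(j_2),\kappa)\in G'$, and add a self-loop $(j,j,\kappa)$ wherever $j$ lacks a $\kappa$-colored edge. For $S\subseteq V$, $B_S$ is $P_{M,\ell}$ conditioned on $G$ having a connected component contained in $S$. A collection $\Sigma$ of $\zeta$-element subsets of $V$ is a $(\mu,\zeta,t)$-sunflower if there is $F\subseteq V$ with $|F|\le t$ (the core) such that every $S\in\Sigma$ contains $F$, and every $x\in(\bigcup_{S\in\Sigma}S)\setminus F$ satisfies $\Pr_{S\in\Sigma}[x\in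 S]\le(\zeta/N)^{1-\mu}$ ($S$ uniform in $\Sigma$). *)

theory Defs
  imports "HOL-Probability.Probability" "Jordan_Normal_Form.Char_Poly"
begin

section \<open>Parameters (N = 2^n, with 10 dividing n so that all quantities are integers)\<close>

definition dd :: nat where "dd = 100"
definition NN :: "nat \<Rightarrow> nat" where "NN n = 2 ^ n"
definition ell :: "nat \<Rightarrow> nat" where "ell n = 2 ^ (n div 10)"
definition zz :: "nat \<Rightarrow> nat" where "zz n = 2 ^ (9 * (n div 10))"
definition MM :: "nat \<Rightarrow> nat" where "MM n = NN n + zz n"   \<comment> \<open>M = (1+\<gamma>)N\<close>
definition zeta :: "nat \<Rightarrow> nat" where "zeta n = zz n + 2 ^ (8 * (n div 10))"  \<comment> \<open>\<zeta> = (1+\<gamma>)z\<close>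
definition alpha :: real where "alpha = 1 / (2 * 10^8)"

definition VV :: "nat \<Rightarrow> nat set" where "VV n = {0..<NN n}"

section \<open>Graphs: G j \<kappa> is the \<kappa>-neighbour of j\<close>

type_synonym graph = "nat \<Rightarrow> nat \<Rightarrow> nat"

definition dreg_graph :: "nat \<Rightarrow> graph \<Rightarrow> bool" where
  "dreg_graph n G \<longleftrightarrow> (\<forall>j\<in>VV n. \<forall>\<kappa><dd. G j \<kappa> \<in> VV n \<and> G (G j \<kappa>) \<kappa> = j)"

definition edge_rel :: "nat \<Rightarrow> graph \<Rightarrow> (nat \<times> nat) set" where
  "edge_rel n G = {(j, G j \<kappa>) | j \<kappa>. j \<in> VV n \<and> \<kappa> < dd}"

definition is_component :: "nat \<Rightarrow> graph \<Rightarrow> nat set \<Rightarrow> bool" where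
  "is_component n G C \<longleftrightarrow> (\<exists>v\<in>VV n. C = {u. (v, u) \<in> (edge_rel n G)\<^sup>*})"

definition norm_adj :: "nat \<Rightarrow> graph \<Rightarrow> real mat" where
  "norm_adj n G = mat (NN n) (NN n) (\<lambda>(i, j). real (card {\<kappa>\<in>{0..<dd}. G i \<kappa> = j}) / real dd)"

definition eig_mset :: "real mat \<Rightarrow> real multiset" where
  "eig_mset A = Abs_multiset (\<lambda>x. order x (char_poly A))"

definition second_eig :: "real mat \<Rightarrow> real" where
  "second_eig A = rev (sorted_list_of_multiset (eig_mset A)) ! 1"

definition expanding :: "nat \<Rightarrow> real \<Rightarrow> graph \<Rightarrow> bool" where
  "expanding n a G \<longleftrightarrow> dreg_graph n G \<and> second_eig (norm_adj n G) \<le> 1 - a"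

definition NO_dist :: "nat \<Rightarrow> graph pmf \<Rightarrow> bool" where
  "NO_dist n D \<longleftrightarrow> set_pmf D \<subseteq> {G. expanding n alpha G}"

definition part_size :: "nat \<Rightarrow> nat \<Rightarrow> nat" where "part_size M l = M div l"
definition part :: "nat \<Rightarrow> nat \<Rightarrow> nat \<Rightarrow> nat set" where
  "part M l i = {i * part_size M l ..< (i + 1) * part_size M l}"

text \<open>A perfect matching on each part is a fixed-point-free involution of that part;
  colour \<kappa>'s matchings on all parts together form one part-preserving fixed-point-free
  involution of V' = {0..<M} (identity outside V').\<close>
definition part_matchings :: "nat \<Rightarrow> nat \<Rightarrow> (nat \<Rightarrow> nat) set" where
  "part_matchings M l = {\<sigma>. (\<forall>i<l. \<forall>x\<in>part M l i. \<sigma> x \<in> part M l i \<and> \<sigma> x \<noteq> x \<and> \<sigma> (\<sigma> x) = x)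
                           \<and> (\<forall>x. x \<notin> {0..<M} \<longrightarrow> \<sigma> x = x)}"

text \<open>d independent uniform choices (one per colour); uniform on the product set.\<close>
definition colour_matchings :: "nat \<Rightarrow> nat \<Rightarrow> (nat \<Rightarrow> nat \<Rightarrow> nat) set" where
  "colour_matchings M l = {0..<dd} \<rightarrow>\<^sub>E part_matchings M l"

text \<open>injections \<iota> with \<iota>(j) in part V_{k(j)}; uniform on this set = independent uniform
  sampling without replacement within each part\<close>
definition injections :: "nat \<Rightarrow> nat \<Rightarrow> nat \<Rightarrow> (nat \<Rightarrow> nat) \<Rightarrow> (nat \<Rightarrow> nat) set" where
  "injections n M l k = {\<iota> \<in> VV n \<rightarrow>\<^sub>E {0..<M}. inj_on \<iota> (VV n) \<and> (\<forall>j\<in>VV n. \<iota> j \<in> part M l (k j))}"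

definition edgeless_graph :: "nat \<Rightarrow> graph" where
  "edgeless_graph n = (\<lambda>j \<kappa>. if j \<in> VV n \<and> \<kappa> < dd then j else 0)"

definition induced_graph :: "nat \<Rightarrow> (nat \<Rightarrow> nat \<Rightarrow> nat) \<Rightarrow> (nat \<Rightarrow> nat) \<Rightarrow> graph" where
  "induced_graph n \<sigma> \<iota> = (\<lambda>j \<kappa>. if j \<in> VV n \<and> \<kappa> < dd then
       (if \<sigma> \<kappa> (\<iota> j) \<in> \<iota> ` VV n then inv_into (VV n) \<iota> (\<sigma> \<kappa> (\<iota> j)) else j)
     else 0)"

definition P_dist :: "nat \<Rightarrow> nat \<Rightarrow> nat \<Rightarrow> graph pmf" where
  "P_dist n M l = do {
     \<sigma> \<leftarrow> pmf_of_set (colour_matchings M l);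
     k \<leftarrow> pmf_of_set (VV n \<rightarrow>\<^sub>E {0..<l});
     (if injections n M l k = {} then return_pmf (edgeless_graph n)
      else do { \<iota> \<leftarrow> pmf_of_set (injections n M l k); return_pmf (induced_graph n \<sigma> \<iota>) })
   }"

definition B_dist :: "nat \<Rightarrow> nat set \<Rightarrow> graph pmf" where
  "B_dist n S = cond_pmf (P_dist n (MM n) (ell n)) {G. \<exists>C. is_component n G C \<and> C \<subseteq> S}"

text \<open>Basis states |j,\<kappa>,z,w\<rangle>: query register (j,\<kappa>,z) and workspace w < W.\<close>
type_synonym qbasis = "nat \<times> nat \<times> nat \<times> nat"
type_synonym qstate = "qbasis \<Rightarrow> complex"
type_synonym qop = "qbasis \<Rightarrow> qbasis \<Rightarrow> complex"

definition qbasis_set :: "nat \<Rightarrow> nat \<Rightarrow> qbasis set" where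
  "qbasis_set n W = VV n \<times> {0..<dd} \<times> VV n \<times> {0..<W}"

definition unitary_on :: "qbasis set \<Rightarrow> qop \<Rightarrow> bool" where
  "unitary_on B U \<longleftrightarrow> (\<forall>x\<in>B. \<forall>y\<in>B. (\<Sum>z\<in>B. cnj (U z x) * U z y) = (if x = y then 1 else 0))"

definition apply_op :: "qbasis set \<Rightarrow> qop \<Rightarrow> qstate \<Rightarrow> qstate" where
  "apply_op B U v = (\<lambda>x. \<Sum>y\<in>B. U x y * v y)"

text \<open>query operator |j,\<kappa>,z\<rangle> \<mapsto> |j,\<kappa>,z XOR G(j,\<kappa>)\<rangle> (a permutation and involution of the basis)\<close>
definition query_op :: "graph \<Rightarrow> qstate \<Rightarrow> qstate" where
  "query_op G v = (\<lambda>(j, \<kappa>, z, w). v (j, \<kappa>, Bit_Operations.xor z (G j \<kappa>), w))"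

record qalg =
  qa_work :: nat
  qa_ops :: "qop list"
  qa_acc :: "qbasis set"

text \<open>A k-query algorithm: unitaries U_0,...,U_k, with queries in between, starting
  from |0,0,0,0\<rangle>, then a computational-basis measurement; accept iff outcome in qa_acc.\<close>
definition valid_alg :: "nat \<Rightarrow> nat \<Rightarrow> qalg \<Rightarrow> bool" where
  "valid_alg n k A \<longleftrightarrow> qa_work A \<ge> 1 \<and> length (qa_ops A) = k + 1 \<and>
     (\<forall>U\<in>set (qa_ops A). unitary_on (qbasis_set n (qa_work A)) U)"

definition init_state :: qstate where
  "init_state = (\<lambda>x. if x = (0, 0, 0, 0) then 1 else 0)"

definition final_state :: "nat \<Rightarrow> qalg \<Rightarrow> graph \<Rightarrow> qstate" where
  "final_state n A G = (let B = qbasis_set n (qa_work A) in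
     foldl (\<lambda>s U. apply_op B U (query_op G s))
           (apply_op B (hd (qa_ops A)) init_state) (tl (qa_ops A)))"

definition accept_prob :: "nat \<Rightarrow> qalg \<Rightarrow> graph \<Rightarrow> real" where
  "accept_prob n A G = (\<Sum>x\<in>qbasis_set n (qa_work A) \<inter> qa_acc A. (cmod (final_state n A G x))\<^sup>2)"

definition exp_accept :: "nat \<Rightarrow> qalg \<Rightarrow> graph pmf \<Rightarrow> real" where
  "exp_accept n A D = measure_pmf.expectation D (\<lambda>G. accept_prob n A G)"

definition sunflower :: "nat \<Rightarrow> real \<Rightarrow> nat \<Rightarrow> real \<Rightarrow> nat set set \<Rightarrow> bool" where
  "sunflower n \<mu> \<zeta> t \<Sigma> \<longleftrightarrow>
     \<Sigma> \<noteq> {} \<and> (\<forall>S\<in>\<Sigma>. S \<subseteq> VV n \<and> card S = \<zeta>) \<and>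
     (\<exists>F \<subseteq> VV n. real (card F) \<le> t \<and> (\<forall>S\<in>\<Sigma>. F \<subseteq> S) \<and>
        (\<forall>x \<in> \<Union>\<Sigma> - F. real (card {S\<in>\<Sigma>. x \<in> S}) / real (card \<Sigma>)
                          \<le> (real \<zeta> / real (NN n)) powr (1 - \<mu>)))"

end

theory Submission imports Defs begin

(* Some witness w is good for at least a 2^-q fraction of all zeta-subsets of V; the algorithm
  with w hard-wired is A'.  In this dense family take the core F maximising
  |{S. F \<subseteq> S}| / \<rho>^|F| with \<rho> = (zeta/N) powr (1 - \<mu>).  Maximality against F \<union> {x}
  bounds the frequency of every point outside F by \<rho>.  Maximality against the empty core,
  together with |{S. F \<subseteq> S}| \<le> (zeta/N)^|F| (N choose zeta), gives 2^q (zeta/N)^(\<mu> |F|) \<ge> 1,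
  i.e. |F| \<le> q / (\<mu> log (N/zeta)), which is at most 2q / (\<mu> log \<ell>) because \<ell> zeta^2 \<le> N^2. *)

lemma binomial_shift_le:
  fixes N z f :: nat
  assumes "f \<le> z" "z \<le> N"
  shows "real ((N - f) choose (z - f)) \<le> (real z / real N) ^ f * real (N choose z)"
  using assms(1)
proof (induction f)
  case 0
  then show ?case by simp
next
  case (Suc f)
  then have "f < z" by simp
  then have pos: "0 < real (N - f)" using assms(2) by simp
  have "(z - f) * ((N - f) choose (z - f)) = (N - f) * ((N - Suc f) choose (z - Suc f))"
    using times_binomial_minus1_eq[of "z - f" "N - f"] \<open>f < z\<close> by simp
  then have "real (z - f) * real ((N - f) choose (z - f))
      = real (N - f) * real ((N - Suc f) choose (z - Suc f))"
    by (metis of_nat_mult)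
  then have step: "real ((N - Suc f) choose (z - Suc f))
      = real (z - f) / real (N - f) * real ((N - f) choose (z - f))"
    using pos by (simp add: field_simps)
  have "real f * real z \<le> real f * real N"
    using assms(2) by (simp add: mult_left_mono)
  then have "real (z - f) * real N \<le> real z * real (N - f)"
    using \<open>f < z\<close> assms(2) by (simp add: algebra_simps)
  then have ratio: "real (z - f) / real (N - f) \<le> real z / real N"
    using pos by (simp add: divide_simps)
  have "real ((N - Suc f) choose (z - Suc f))
      \<le> real z / real N * ((real z / real N) ^ f * real (N choose z))"
    unfolding step using Suc \<open>f < z\<close> by (intro mult_mono ratio) auto
  then show ?case by simp
qed

lemma card_supersets_le:
  fixes V F :: "'a set"
  assumes "finite V" "F \<subseteq> V"
  shows "card {S. S \<subseteq> V \<and> card S = z \<and> F \<subseteq> S} \<le> (card V - card F) choose (z - card F)"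
proof -
  have "finite F" using assms finite_subset by blast
  have "card {S. S \<subseteq> V \<and> card S = z \<and> F \<subseteq> S} \<le> card {T. T \<subseteq> V - F \<and> card T = z - card F}"
  proof (rule card_inj_on_le[where f = "\<lambda>S. S - F"])
    show "inj_on (\<lambda>S. S - F) {S. S \<subseteq> V \<and> card S = z \<and> F \<subseteq> S}"
      by (rule inj_onI) blast
    show "(\<lambda>S. S - F) ` {S. S \<subseteq> V \<and> card S = z \<and> F \<subseteq> S} \<subseteq> {T. T \<subseteq> V - F \<and> card T = z - card F}"
      using \<open>finite F\<close> by (auto simp: card_Diff_subset)
  qed (use assms in simp)
  also have "\<dots> = card (V - F) choose (z - card F)"
    using assms by (simp add: n_subsets)
  finally show ?thesis
    using assms \<open>finite F\<close> by (simp add: card_Diff_subset)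
qed

lemma card_supersets_le_ratio:
  fixes V F :: "'a set"
  assumes "finite V" "F \<subseteq> V" "card F \<le> z" "z \<le> card V"
  shows "real (card {S. S \<subseteq> V \<and> card S = z \<and> F \<subseteq> S}) \<le> (z / card V) ^ card F * (card V choose z)"
  using card_supersets_le[OF assms(1,2), of z] binomial_shift_le[OF assms(3,4)]
  by (meson of_nat_le_iff order_trans)

lemma exists_large_fibre:
  assumes "finite W" "W \<noteq> {}" "f ` Z \<subseteq> W"
  obtains w where "w \<in> W" "card Z \<le> card W * card {x\<in>Z. f x = w}"
proof -
  define fibre where "fibre w = card {x\<in>Z. f x = w}" for w
  have "Max (fibre ` W) \<in> fibre ` W" using assms(1,2) by simp
  then obtain w where "w \<in> W" "fibre w = Max (fibre ` W)" by auto
  then have max: "fibre w' \<le> fibre w" if "w' \<in> W" for w'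
    using that assms(1) by simp
  have "Z = (\<Union>w'\<in>W. {x\<in>Z. f x = w'})" using assms(3) by auto
  then have "card Z \<le> (\<Sum>w'\<in>W. fibre w')"
    unfolding fibre_def by (metis card_UN_le[OF assms(1)])
  also have "\<dots> \<le> card W * fibre w"
    using sum_mono[of W fibre "\<lambda>_. fibre w"] max by simp
  finally show ?thesis using that \<open>w \<in> W\<close> unfolding fibre_def by blast
qed

lemma exists_common_witness:
  fixes P :: "'a \<Rightarrow> bool list \<Rightarrow> bool"
  assumes "finite Z" "\<forall>S\<in>Z. \<exists>w. length w = q \<and> P S w"
  obtains w where "length w = q" "card Z \<le> 2 ^ q * card {S\<in>Z. P S w}"
proof -
  define Ws where "Ws = {w :: bool list. length w = q}"
  have "finite Ws" "card Ws = 2 ^ q"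
    using finite_lists_length_eq[of "UNIV :: bool set" q] card_lists_length_eq[of "UNIV :: bool set" q]
    by (simp_all add: Ws_def)
  have "replicate q True \<in> Ws" by (simp add: Ws_def)
  obtain W where W: "\<forall>S\<in>Z. W S \<in> Ws \<and> P S (W S)"
    using bchoice[OF assms(2)] unfolding Ws_def by auto
  obtain w where "w \<in> Ws" "card Z \<le> card Ws * card {S\<in>Z. W S = w}"
    using exists_large_fibre[OF \<open>finite Ws\<close>, of W Z] \<open>replicate q True \<in> Ws\<close> W by blast
  moreover have "card {S\<in>Z. W S = w} \<le> card {S\<in>Z. P S w}"
    using W assms(1) by (intro card_mono) auto
  ultimately have "card Z \<le> 2 ^ q * card {S\<in>Z. P S w}"
    using \<open>card Ws = 2 ^ q\<close> by (metis le_trans mult_le_mono2)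
  then show ?thesis using that \<open>w \<in> Ws\<close> unfolding Ws_def by blast
qed

lemma exists_heavy_core:
  fixes V :: "'a set" and \<Sigma> :: "'a set set" and \<rho> :: real
  assumes "finite V" "0 < \<rho>"
  obtains F where "F \<subseteq> V"
    "real (card \<Sigma>) * \<rho> ^ card F \<le> card {S\<in>\<Sigma>. F \<subseteq> S}"
    "\<And>x. x \<in> V - F \<Longrightarrow> card {S\<in>\<Sigma>. F \<subseteq> S \<and> x \<in> S} \<le> \<rho> * card {S\<in>\<Sigma>. F \<subseteq> S}"
proof -
  define weight where "weight F = card {S\<in>\<Sigma>. F \<subseteq> S} / \<rho> ^ card F" for F
  have "Max (weight ` Pow V) \<in> weight ` Pow V" using assms(1) by (intro Max_in) auto
  then obtain F where "F \<subseteq> V" "weight F = Max (weight ` Pow V)" by auto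
  then have max: "weight F' \<le> weight F" if "F' \<subseteq> V" for F'
    using that assms(1) by simp
  have "weight {} \<le> weight F" using max by blast
  then have heavy: "real (card \<Sigma>) * \<rho> ^ card F \<le> card {S\<in>\<Sigma>. F \<subseteq> S}"
    using assms(2) by (simp add: weight_def pos_le_divide_eq)
  have "card {S\<in>\<Sigma>. F \<subseteq> S \<and> x \<in> S} \<le> \<rho> * card {S\<in>\<Sigma>. F \<subseteq> S}" if "x \<in> V - F" for x
  proof -
    have "finite F" using \<open>F \<subseteq> V\<close> assms(1) finite_subset by blast
    then have "card (insert x F) = Suc (card F)" using that by simp
    moreover have "{S\<in>\<Sigma>. insert x F \<subseteq> S} = {S\<in>\<Sigma>. F \<subseteq> S \<and> x \<in> S}" by auto
    moreover have "weight (insert x F) \<le> weight F" using max that \<open>F \<subseteq> V\<close> by simp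
    ultimately show ?thesis
      using assms(2) by (simp add: weight_def divide_simps mult.commute)
  qed
  then show ?thesis using that \<open>F \<subseteq> V\<close> heavy by blast
qed

lemma card_heavy_core_le:
  fixes V F :: "'a set" and \<Sigma> :: "'a set set" and \<mu> :: real
  assumes V: "finite V" "0 < z" "z \<le> card V" "F \<subseteq> V"
    and family: "\<Sigma> \<subseteq> {S. S \<subseteq> V \<and> card S = z}"
    and dense: "card V choose z \<le> 2 ^ q * card \<Sigma>"
    and heavy: "real (card \<Sigma>) * ((z / card V) powr (1 - \<mu>)) ^ card F \<le> card {S\<in>\<Sigma>. F \<subseteq> S}"
  shows "real (card F) * \<mu> * log 2 (card V / z) \<le> q"
proof -
  define N f x where "N = card V" and "f = card F" and "x = real z / real N"
  have "0 < x" using V(2,3) by (simp add: x_def N_def)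
  have "0 < N choose z" using V(3) by (simp add: N_def)
  then have "0 < card \<Sigma>" using dense unfolding N_def by (metis gr0I le_zero_eq mult_0_right)
  then have "0 < real (card \<Sigma>) * (x powr (1 - \<mu>)) ^ f" using \<open>0 < x\<close> by simp
  then have "0 < card {S\<in>\<Sigma>. F \<subseteq> S}"
    using heavy unfolding x_def N_def f_def by linarith
  then obtain S where "S \<in> \<Sigma>" "F \<subseteq> S"
    by (metis (no_types, lifting) card.empty empty_Collect_eq less_irrefl)
  then have "S \<subseteq> V" "card S = z" using family by auto
  then have "card F \<le> z"
    using \<open>F \<subseteq> S\<close> V(1) by (metis card_mono finite_subset)
  have "real (card \<Sigma>) * (x powr (1 - \<mu>)) ^ f \<le> card {S\<in>\<Sigma>. F \<subseteq> S}"
    using heavy unfolding x_def N_def f_def .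
  also have "\<dots> \<le> card {S. S \<subseteq> V \<and> card S = z \<and> F \<subseteq> S}"
    using family V(1) by (intro of_nat_mono card_mono) auto
  also have "\<dots> \<le> x ^ f * (N choose z)"
    unfolding x_def N_def f_def using V(1,4) \<open>card F \<le> z\<close> V(3)
    by (rule card_supersets_le_ratio)
  also have "\<dots> \<le> x ^ f * (2 ^ q * card \<Sigma>)"
    using dense \<open>0 < x\<close> unfolding N_def
    by (intro mult_left_mono) (simp_all, metis of_nat_le_iff of_nat_mult of_nat_numeral of_nat_power)
  finally have "(x powr (1 - \<mu>)) ^ f \<le> x ^ f * 2 ^ q"
    using \<open>0 < card \<Sigma>\<close> by (simp add: mult.left_commute)
  then have "log 2 ((x powr (1 - \<mu>)) ^ f) \<le> log 2 (x ^ f * 2 ^ q)"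
    using \<open>0 < x\<close> by simp
  then have "f * ((1 - \<mu>) * log 2 x) \<le> q + f * log 2 x"
    using \<open>0 < x\<close> by (simp add: log_mult log_nat_power log_powr)
  moreover have "log 2 (N / z) = - log 2 x"
    using \<open>0 < x\<close> V(2) by (simp add: x_def log_divide)
  ultimately show ?thesis
    unfolding N_def f_def by (simp add: algebra_simps)
qed

lemma dense_family_contains_sunflower:
  assumes "0 < z" "z < NN n" "0 < \<mu>"
    and family: "\<Sigma>0 \<subseteq> {S. S \<subseteq> VV n \<and> card S = z}"
    and dense: "NN n choose z \<le> 2 ^ q * card \<Sigma>0"
    and t: "real q \<le> t * (\<mu> * log 2 (NN n / z))"
  shows "\<exists>\<Sigma>\<subseteq>\<Sigma>0. sunflower n \<mu> z t \<Sigma>"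
proof -
  have V: "finite (VV n)" "card (VV n) = NN n" by (simp_all add: VV_def)
  define \<rho> where "\<rho> = (real z / real (NN n)) powr (1 - \<mu>)"
  have "0 < \<rho>" using assms(1,2) by (simp add: \<rho>_def)
  obtain F where F: "F \<subseteq> VV n"
    "real (card \<Sigma>0) * \<rho> ^ card F \<le> card {S\<in>\<Sigma>0. F \<subseteq> S}"
    "\<And>x. x \<in> VV n - F \<Longrightarrow> card {S\<in>\<Sigma>0. F \<subseteq> S \<and> x \<in> S} \<le> \<rho> * card {S\<in>\<Sigma>0. F \<subseteq> S}"
    using exists_heavy_core[OF V(1) \<open>0 < \<rho>\<close>] by blast
  define \<Sigma> where "\<Sigma> = {S\<in>\<Sigma>0. F \<subseteq> S}"
  have "real (card F) * \<mu> * log 2 (card (VV n) / z) \<le> q"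
    using assms(2) dense F(2)
    by (intro card_heavy_core_le[OF V(1) assms(1) _ F(1) family]) (simp_all add: V(2) \<rho>_def)
  then have "real (card F) * (\<mu> * log 2 (NN n / z)) \<le> t * (\<mu> * log 2 (NN n / z))"
    using t V(2) by (simp add: mult.assoc)
  moreover have "0 < \<mu> * log 2 (NN n / z)"
    using assms(1-3) by simp
  ultimately have "real (card F) \<le> t"
    by (rule mult_right_le_imp_le)
  have "0 < NN n choose z" using assms(2) by simp
  then have "0 < card \<Sigma>0" using dense by (metis gr0I le_zero_eq mult_0_right)
  then have "0 < real (card \<Sigma>0) * \<rho> ^ card F" using \<open>0 < \<rho>\<close> by simp
  then have "0 < card \<Sigma>" using F(2) unfolding \<Sigma>_def by linarith
  have frequency: "real (card {S\<in>\<Sigma>. x \<in> S}) / real (card \<Sigma>) \<le> \<rho>" if "x \<in> \<Union>\<Sigma> - F" for x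
  proof -
    have "x \<in> VV n - F" using that family unfolding \<Sigma>_def by auto
    moreover have "{S\<in>\<Sigma>. x \<in> S} = {S\<in>\<Sigma>0. F \<subseteq> S \<and> x \<in> S}"
      unfolding \<Sigma>_def by auto
    ultimately have "real (card {S\<in>\<Sigma>. x \<in> S}) \<le> \<rho> * card \<Sigma>"
      using F(3) unfolding \<Sigma>_def by simp
    then show ?thesis using \<open>0 < card \<Sigma>\<close> by (simp add: divide_simps)
  qed
  have "\<Sigma> \<noteq> {}" using \<open>0 < card \<Sigma>\<close> by auto
  moreover have "\<forall>S\<in>\<Sigma>. S \<subseteq> VV n \<and> card S = z" "\<forall>S\<in>\<Sigma>. F \<subseteq> S"
    using family by (auto simp: \<Sigma>_def)
  ultimately have "sunflower n \<mu> z t \<Sigma>"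
    unfolding sunflower_def using F(1) \<open>real (card F) \<le> t\<close> frequency
    by (intro conjI exI[of _ F]) (auto simp: \<rho>_def)
  moreover have "\<Sigma> \<subseteq> \<Sigma>0" unfolding \<Sigma>_def by blast
  ultimately show ?thesis by blast
qed

lemma ell_mult_zeta_square_le:
  assumes "20 \<le> n" "10 dvd n"
  shows "2 \<le> ell n" "ell n * zeta n ^ 2 \<le> NN n ^ 2"
proof -
  obtain m where n: "n = 10 * m" using assms(2) by blast
  then have "2 \<le> m" "n div 10 = m" using assms(1) by simp_all
  have "(2::nat) ^ 1 \<le> 2 ^ m" using \<open>2 \<le> m\<close> by (intro power_increasing) simp_all
  then show "2 \<le> ell n" by (simp add: ell_def \<open>n div 10 = m\<close>)
  have "(2::nat) ^ (8 * m) \<le> 2 ^ (9 * m)" by (intro power_increasing) simp_all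
  then have "zeta n \<le> 2 ^ (9 * m + 1)" by (simp add: zeta_def zz_def \<open>n div 10 = m\<close>)
  then have "zeta n ^ 2 \<le> (2 ^ (9 * m + 1)) ^ 2" by (rule power_mono) simp
  then have "ell n * zeta n ^ 2 \<le> 2 ^ m * (2 ^ (9 * m + 1)) ^ 2"
    unfolding ell_def \<open>n div 10 = m\<close> by (rule mult_left_mono) simp
  also have "\<dots> = 2 ^ (m + (9 * m + 1) * 2)" by (simp only: power_add power_mult)
  also have "\<dots> \<le> 2 ^ (20 * m)" using \<open>2 \<le> m\<close> by (intro power_increasing) simp_all
  also have "\<dots> = NN n ^ 2" by (simp add: NN_def n flip: power_mult)
  finally show "ell n * zeta n ^ 2 \<le> NN n ^ 2" .
qed

lemma log_ell_le_twice_log_NN_div_zeta: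
  assumes "20 \<le> n" "10 dvd n"
  shows "zeta n < NN n" "log 2 (ell n) \<le> 2 * log 2 (NN n / zeta n)"
proof -
  note bounds = ell_mult_zeta_square_le[OF assms]
  have "0 < zeta n" by (simp add: zeta_def)
  have "zeta n ^ 2 < 2 * zeta n ^ 2" using \<open>0 < zeta n\<close> by simp
  also have "\<dots> \<le> NN n ^ 2" using bounds by (metis le_trans mult_le_mono1)
  finally show "zeta n < NN n" by (rule power_less_imp_less_base) simp
  have "real (ell n) * real (zeta n) ^ 2 \<le> real (NN n) ^ 2"
    using bounds(2) by (metis of_nat_le_iff of_nat_mult of_nat_power)
  then have "log 2 (real (ell n) * real (zeta n) ^ 2) \<le> log 2 (real (NN n) ^ 2)"
    using bounds(1) \<open>0 < zeta n\<close> \<open>zeta n < NN n\<close> by (subst log_le_cancel_iff) auto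
  then show "log 2 (ell n) \<le> 2 * log 2 (NN n / zeta n)"
    using bounds(1) \<open>0 < zeta n\<close> \<open>zeta n < NN n\<close>
    by (simp add: log_mult log_nat_power log_divide)
qed

lemma dense_zeta_family_contains_sunflower:
  assumes "20 \<le> n" "10 dvd n" "0 < \<mu>"
    and family: "\<Sigma>0 \<subseteq> {S. S \<subseteq> VV n \<and> card S = zeta n}"
    and dense: "NN n choose zeta n \<le> 2 ^ q * card \<Sigma>0"
  shows "\<exists>\<Sigma>\<subseteq>\<Sigma>0. sunflower n \<mu> (zeta n) (2 * real q / (\<mu> * log 2 (ell n))) \<Sigma>"
proof (rule dense_family_contains_sunflower[OF _ _ \<open>0 < \<mu>\<close> family dense])
  note log_bounds = log_ell_le_twice_log_NN_div_zeta[OF assms(1,2)]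
  show "0 < zeta n" by (simp add: zeta_def)
  show "zeta n < NN n" by (rule log_bounds(1))
  have "0 < log 2 (ell n)" using ell_mult_zeta_square_le[OF assms(1,2)] by simp
  have "real q * log 2 (ell n) \<le> real q * (2 * log 2 (NN n / zeta n))"
    using log_bounds(2) by (rule mult_left_mono) simp
  then show "real q \<le> 2 * real q / (\<mu> * log 2 (ell n)) * (\<mu> * log 2 (NN n / zeta n))"
    using \<open>0 < log 2 (ell n)\<close> \<open>0 < \<mu>\<close> by (simp add: field_simps)
qed

theorem lemma18:
  "\<exists>n0. \<forall>n \<ge> n0. 10 dvd n \<longrightarrow>
    (\<forall>(\<epsilon>::real) (q::nat) (k::nat) (A :: bool list \<Rightarrow> qalg).
      \<epsilon> > 0 \<longrightarrow>
      (\<forall>w. length w = q \<longrightarrow> valid_alg n k (A w)) \<longrightarrow>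
      (\<forall>S. S \<subseteq> VV n \<and> card S = zeta n \<longrightarrow>
         (\<exists>w. length w = q \<and> exp_accept n (A w) (B_dist n S) \<ge> 1 - \<epsilon>)) \<longrightarrow>
      (\<forall>D w. NO_dist n D \<and> length w = q \<longrightarrow> exp_accept n (A w) D \<le> \<epsilon>) \<longrightarrow>
      (\<forall>\<mu>::real. \<mu> > 0 \<longrightarrow>
         (\<exists>\<Sigma> A'. sunflower n \<mu> (zeta n) (2 * real q / (\<mu> * log 2 (real (ell n)))) \<Sigma> \<and>
                  valid_alg n k A' \<and>
                  (\<forall>S\<in>\<Sigma>. exp_accept n A' (B_dist n S) \<ge> 1 - \<epsilon>) \<and>
                  (\<forall>D. NO_dist n D \<longrightarrow> exp_accept n A' D \<le> \<epsilon>))))"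
proof (intro exI[of _ 20] allI impI)
  fix n q k :: nat and \<epsilon> \<mu> :: real and A :: "bool list \<Rightarrow> qalg"
  assume n: "20 \<le> n" "10 dvd n"
    and valid: "\<forall>w. length w = q \<longrightarrow> valid_alg n k (A w)"
    and yes: "\<forall>S. S \<subseteq> VV n \<and> card S = zeta n \<longrightarrow>
         (\<exists>w. length w = q \<and> exp_accept n (A w) (B_dist n S) \<ge> 1 - \<epsilon>)"
    and no: "\<forall>D w. NO_dist n D \<and> length w = q \<longrightarrow> exp_accept n (A w) D \<le> \<epsilon>"
    and "0 < \<mu>"
  define Z where "Z = {S. S \<subseteq> VV n \<and> card S = zeta n}"
  have "finite Z" "card Z = NN n choose zeta n"
    by (simp_all add: Z_def VV_def n_subsets)
  have "\<forall>S\<in>Z. \<exists>w. length w = q \<and> 1 - \<epsilon> \<le> exp_accept n (A w) (B_dist n S)"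
    using yes by (simp add: Z_def)
  then obtain w where "length w = q"
    and dense: "card Z \<le> 2 ^ q * card {S\<in>Z. 1 - \<epsilon> \<le> exp_accept n (A w) (B_dist n S)}"
    by (rule exists_common_witness[OF \<open>finite Z\<close>])
  have family: "{S\<in>Z. 1 - \<epsilon> \<le> exp_accept n (A w) (B_dist n S)} \<subseteq> {S. S \<subseteq> VV n \<and> card S = zeta n}"
    by (auto simp: Z_def)
  obtain \<Sigma> where \<Sigma>: "\<Sigma> \<subseteq> {S\<in>Z. 1 - \<epsilon> \<le> exp_accept n (A w) (B_dist n S)}"
    "sunflower n \<mu> (zeta n) (2 * real q / (\<mu> * log 2 (ell n))) \<Sigma>"
    using dense_zeta_family_contains_sunflower[OF n \<open>0 < \<mu>\<close> family dense[unfolded \<open>card Z = _\<close>]]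
    by blast
  show "\<exists>\<Sigma> A'. sunflower n \<mu> (zeta n) (2 * real q / (\<mu> * log 2 (real (ell n)))) \<Sigma> \<and>
                  valid_alg n k A' \<and>
                  (\<forall>S\<in>\<Sigma>. exp_accept n A' (B_dist n S) \<ge> 1 - \<epsilon>) \<and>
                  (\<forall>D. NO_dist n D \<longrightarrow> exp_accept n A' D \<le> \<epsilon>)"
    using \<Sigma> valid no \<open>length w = q\<close> by (intro exI[of _ \<Sigma>] exI[of _ "A w"] conjI ballI allI impI) blast+
qed

end
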